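(* Let $G$ be a topological group and $\rho:G\to U(N)$ a continuous unitary representation. For $V\in PU(N)$ commuting with $\rho(g)$ for all $g$, choose a lift $\tilde V\in U(N)$; then $\rho(g)^\dagger\tilde V\rho(g)=\chi[V](g)\tilde V$ defines a one-dimensional representation $\chi[V]:G\to U(1)$ independent of the lift. The path components of the space of $\rho$-symmetric projective unitaries in $PU(N)$ are in bijection with the values of $\chi[V]$ attained, each attained value having finite order; every element of finite order in $X_G=\mathrm{Hom}(G,U(1))$ (the torsion subgroup $X_G^T$) is attained for a suitable representation $\rho$ (namely $\rho=\bigoplus_{p=0}^{n-1}\chi^p$ if $\chi$ has order $n$). Moreover $\chi[V]$ is stable under $V\mapsto V\otimes\mathbb{1}$ and satisfies $\chi[V\otimes Q]=\chi[V]\chi[Q]$.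
   Context: $X_G$ is the group of continuous homomorphisms $G\to U(1)$ with pointwise multiplication; $X_G^T$ its subgroup of elements of finite order. A projective unitary is $\rho$-symmetric if it commutes with $\rho(g)$ in $PU(N)$ for all $g\in G$. *)

theory Defs
  imports "HOL-Analysis.Analysis" "HOL-Algebra.Group"
begin

definition topological_group :: "('g, 'x) monoid_scheme \<Rightarrow> 'g topology \<Rightarrow> bool" where
  "topological_group G T \<longleftrightarrow> group G \<and> topspace T = carrier G \<and>
     continuous_map (prod_topology T T) T (\<lambda>(x, y). x \<otimes>\<^bsub>G\<^esub> y) \<and>
     continuous_map T T (\<lambda>x. inv\<^bsub>G\<^esub> x)"

definition character :: "('g, 'x) monoid_scheme \<Rightarrow> 'g topology \<Rightarrow> ('g \<Rightarrow> complex) \<Rightarrow> bool" where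
  "character G T \<psi> \<longleftrightarrow> continuous_map T euclidean \<psi> \<and>
     (\<forall>g\<in>carrier G. cmod (\<psi> g) = 1) \<and>
     (\<forall>g\<in>carrier G. \<forall>h\<in>carrier G. \<psi> (g \<otimes>\<^bsub>G\<^esub> h) = \<psi> g * \<psi> h)"

definition finite_order_char :: "('g, 'x) monoid_scheme \<Rightarrow> ('g \<Rightarrow> complex) \<Rightarrow> bool" where
  "finite_order_char G \<psi> \<longleftrightarrow> (\<exists>n::nat. n > 0 \<and> (\<forall>g\<in>carrier G. \<psi> g ^ n = 1))"

definition char_order :: "('g, 'x) monoid_scheme \<Rightarrow> ('g \<Rightarrow> complex) \<Rightarrow> nat" where
  "char_order G \<psi> = (LEAST n::nat. n > 0 \<and> (\<forall>g\<in>carrier G. \<psi> g ^ n = 1))"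

definition adjoint_mat :: "complex^'n^'n \<Rightarrow> complex^'n^'n" where
  "adjoint_mat A = (\<chi> i j. cnj (A $ j $ i))"

definition scal_mat :: "complex \<Rightarrow> complex^'n^'n \<Rightarrow> complex^'n^'n" where
  "scal_mat c A = (\<chi> i j. c * A $ i $ j)"

definition unitary_set :: "(complex^'n^'n) set" where
  "unitary_set = {U. adjoint_mat U ** U = mat 1 \<and> U ** adjoint_mat U = mat 1}"

definition U_top :: "(complex^'n^'n) topology" where
  "U_top = subtopology euclidean unitary_set"

text \<open>The class of U in PU(N) = U(N)/U(1).\<close>
definition pclass :: "complex^'n^'n \<Rightarrow> (complex^'n^'n) set" where
  "pclass U = {scal_mat c U | c. cmod c = 1}"

definition PU_set :: "(complex^'n^'n) set set" where
  "PU_set = pclass ` unitary_set"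

definition PU_top :: "(complex^'n^'n) set topology" where
  "PU_top = topology (\<lambda>S. S \<subseteq> PU_set \<and> openin U_top {U \<in> unitary_set. pclass U \<in> S})"

definition unitary_rep :: "('g, 'x) monoid_scheme \<Rightarrow> 'g topology \<Rightarrow> ('g \<Rightarrow> complex^'n^'n) \<Rightarrow> bool" where
  "unitary_rep G T \<rho> \<longleftrightarrow> continuous_map T euclidean \<rho> \<and>
     (\<forall>g\<in>carrier G. \<rho> g \<in> unitary_set) \<and>
     (\<forall>g\<in>carrier G. \<forall>h\<in>carrier G. \<rho> (g \<otimes>\<^bsub>G\<^esub> h) = \<rho> g ** \<rho> h)"

definition sym_PU :: "('g, 'x) monoid_scheme \<Rightarrow> ('g \<Rightarrow> complex^'n^'n) \<Rightarrow> (complex^'n^'n) set set" where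
  "sym_PU G \<rho> = {V \<in> PU_set. \<forall>g\<in>carrier G. \<forall>U\<in>V. pclass (U ** \<rho> g) = pclass (\<rho> g ** U)}"

definition chiV :: "('g, 'x) monoid_scheme \<Rightarrow> ('g \<Rightarrow> complex^'n^'n) \<Rightarrow> (complex^'n^'n) set \<Rightarrow> 'g \<Rightarrow> complex" where
  "chiV G \<rho> V = (\<lambda>g\<in>carrier G. THE c. adjoint_mat (\<rho> g) ** (SOME U. U \<in> V) ** \<rho> g
                                        = scal_mat c (SOME U. U \<in> V))"

definition kron :: "complex^'n^'n \<Rightarrow> complex^'m^'m \<Rightarrow> complex^('n \<times> 'm)^('n \<times> 'm)" where
  "kron A B = (\<chi> p q. A $ fst p $ fst q * B $ snd p $ snd q)"

definition tensor_rep :: "('g \<Rightarrow> complex^'n^'n) \<Rightarrow> ('g \<Rightarrow> complex^'m^'m) \<Rightarrow> 'g \<Rightarrow> complex^('n \<times> 'm)^('n \<times> 'm)" where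
  "tensor_rep \<rho> \<sigma> = (\<lambda>g. kron (\<rho> g) (\<sigma> g))"

definition ptensor :: "(complex^'n^'n) set \<Rightarrow> (complex^'m^'m) set \<Rightarrow> (complex^('n \<times> 'm)^('n \<times> 'm)) set" where
  "ptensor V Q = {kron U W | U W. U \<in> V \<and> W \<in> Q}"

text \<open>The representation \<oplus>_{p<n} \<psi>^p, with the diagonal indexed via a bijection e : 'k \<rightarrow> {..<n}.\<close>
definition diag_powers_rep :: "('k \<Rightarrow> nat) \<Rightarrow> ('g \<Rightarrow> complex) \<Rightarrow> 'g \<Rightarrow> complex^'k^'k" where
  "diag_powers_rep e \<psi> = (\<lambda>g. \<chi> i j. if i = j then \<psi> g ^ e i else 0)"

end

theory Submission
  imports Defs
begin

(* The scalar chiV[V](g) by which conjugation with rho(g) acts on a lift U of V does not depend on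
   the lift, since lifts differ by scalars; it is multiplicative because conjugations compose, and
   continuous because it is a ratio of entries of rho(g)^H U rho(g) and U. Taking determinants in
   rho(g)^H U rho(g) = chiV[V](g) U gives chiV[V](g)^N = 1, so V |-> chiV[V](g) takes finitely
   many values on the symmetric subspace, each with a closed fibre, and is therefore constant along
   paths. Conversely, if V and W have the same character and lifts U0, U1, then M = U0^H U1 commutes
   with every rho(g). Rescaled to a unitary K without eigenvalue -1, the Cayley-type path
   t |-> ((1 - t) + (1 + t) K) ((1 + t) + (1 - t) K)^-1 runs through unitaries commuting with rho
   from 1 to K, and U0 times it joins V to W. A character psi with psi^n = 1 is attained by the cyclic
   shift, which conjugation by diag(psi^0, ..., psi^(n-1)) multiplies by psi; multiplicativity under
   tensor products is inherited from the Kronecker product. *)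


section \<open>Matrix algebra and the unitary group\<close>

lemma scal_mat_nth [simp]: "scal_mat c A $ i $ j = c * A $ i $ j"
  by (simp add: scal_mat_def)

lemma adjoint_mat_nth [simp]: "adjoint_mat A $ i $ j = cnj (A $ j $ i)"
  by (simp add: adjoint_mat_def)

lemma matrix_mult_nth: "(A ** B) $ i $ j = (\<Sum>k\<in>UNIV. A $ i $ k * B $ k $ j)"
  by (simp add: matrix_matrix_mult_def)

lemma adjoint_mat_adjoint_mat [simp]: "adjoint_mat (adjoint_mat A) = A"
  by (simp add: vec_eq_iff)

lemma adjoint_mat_mult: "adjoint_mat (A ** B) = adjoint_mat B ** adjoint_mat A"
  by (simp add: vec_eq_iff matrix_mult_nth mult.commute)

lemma adjoint_mat_scal_mat: "adjoint_mat (scal_mat c A) = scal_mat (cnj c) (adjoint_mat A)"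
  by (simp add: vec_eq_iff)

lemma adjoint_mat_add: "adjoint_mat (A + B) = adjoint_mat A + adjoint_mat B"
  by (simp add: vec_eq_iff)

lemma adjoint_mat_one [simp]: "adjoint_mat (mat 1) = (mat 1 :: complex^'n^'n)"
  by (simp add: vec_eq_iff mat_def)

lemma scal_mat_mult_left [simp]: "scal_mat c A ** B = scal_mat c (A ** B)"
  by (simp add: vec_eq_iff matrix_mult_nth sum_distrib_left mult.assoc)

lemma scal_mat_mult_right [simp]: "A ** scal_mat c B = scal_mat c (A ** B)"
  by (simp add: vec_eq_iff matrix_mult_nth sum_distrib_left mult.left_commute)

lemma scal_mat_scal_mat [simp]: "scal_mat c (scal_mat d A) = scal_mat (c * d) A"
  by (simp add: vec_eq_iff mult.assoc)

lemma scal_mat_1 [simp]: "scal_mat 1 A = A"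
  by (simp add: vec_eq_iff)

lemma scal_mat_0 [simp]: "scal_mat 0 A = 0"
  by (simp add: vec_eq_iff)

lemma scal_mat_add_left: "scal_mat (c + d) A = scal_mat c A + scal_mat d A"
  by (simp add: vec_eq_iff distrib_right)

lemma scal_mat_add_right: "scal_mat c (A + B) = scal_mat c A + scal_mat c B"
  by (simp add: vec_eq_iff distrib_left)

lemma matrix_add_rdistrib: "(A + B) ** C = A ** C + B ** (C :: 'a::semiring_1^'n^'n)"
  by (simp add: vec_eq_iff matrix_mult_nth distrib_right sum.distrib)

lemma scal_mat_mult_vector: "scal_mat c A *v x = c *s (A *v x)"
  by (simp add: vec_eq_iff matrix_vector_mult_def sum_distrib_left mult.assoc)

lemma scal_mat_eq_mat_mult: "scal_mat c A = mat c ** (A :: complex^'n^'n)"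
  by (simp add: vec_eq_iff matrix_mult_nth mat_def if_distrib[of "\<lambda>x. x * _"] cong: if_cong)

lemma scal_mat_cancel_left:
  "(A :: complex^'n^'n) \<noteq> 0 \<Longrightarrow> scal_mat c A = scal_mat d A \<longleftrightarrow> c = d"
  by (auto simp: vec_eq_iff)

lemma mat_1_neq_0: "(mat 1 :: complex^'n^'n) \<noteq> 0"
  by (simp add: vec_eq_iff mat_def)

lemma det_scal_mat: "det (scal_mat c (A :: complex^'n^'n)) = c ^ CARD('n) * det A"
  by (simp add: scal_mat_eq_mat_mult det_mul det_diagonal mat_def)

lemma cnj_mult_self_eq_1: "cmod c = 1 \<Longrightarrow> cnj c * c = 1"
  by (metis complex_norm_square mult.commute of_real_1 power_one)

lemma mult_cnj_self_eq_1: "cmod c = 1 \<Longrightarrow> c * cnj c = 1"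
  by (metis cnj_mult_self_eq_1 mult.commute)

lemma continuous_on_matrix_mult [continuous_intros]:
  fixes f g :: "'a::topological_space \<Rightarrow> complex^'n^'n"
  shows "continuous_on S f \<Longrightarrow> continuous_on S g \<Longrightarrow> continuous_on S (\<lambda>x. f x ** g x)"
  unfolding matrix_matrix_mult_def by (intro continuous_intros)

lemma continuous_on_adjoint_mat [continuous_intros]:
  fixes f :: "'a::topological_space \<Rightarrow> complex^'n^'n"
  shows "continuous_on S f \<Longrightarrow> continuous_on S (\<lambda>x. adjoint_mat (f x))"
  unfolding adjoint_mat_def by (intro continuous_intros)

lemma continuous_on_scal_mat [continuous_intros]:
  fixes f :: "'a::topological_space \<Rightarrow> complex^'n^'n"
  shows "continuous_on S c \<Longrightarrow> continuous_on S f \<Longrightarrow> continuous_on S (\<lambda>x. scal_mat (c x) (f x))"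
  unfolding scal_mat_def by (intro continuous_intros)

lemma unitary_set_iff: "U \<in> unitary_set \<longleftrightarrow> adjoint_mat U ** U = mat 1"
  unfolding unitary_set_def using matrix_left_right_inverse by blast

lemma unitary_setD:
  "U \<in> unitary_set \<Longrightarrow> adjoint_mat U ** U = mat 1"
  "U \<in> unitary_set \<Longrightarrow> U ** adjoint_mat U = mat 1"
  by (simp_all add: unitary_set_def)

lemma unitary_cancel:
  "U \<in> unitary_set \<Longrightarrow> adjoint_mat U ** (U ** X) = X"
  "U \<in> unitary_set \<Longrightarrow> U ** (adjoint_mat U ** X) = X"
  by (metis matrix_mul_assoc matrix_mul_lid unitary_setD)+

lemma unitary_one: "mat 1 \<in> unitary_set"
  by (simp add: unitary_set_def)

lemma unitary_mult: "U \<in> unitary_set \<Longrightarrow> W \<in> unitary_set \<Longrightarrow> U ** W \<in> unitary_set"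
  by (simp add: unitary_set_iff unitary_setD adjoint_mat_mult matrix_mul_assoc
      flip: matrix_mul_assoc[of "adjoint_mat W"])

lemma unitary_adjoint: "U \<in> unitary_set \<Longrightarrow> adjoint_mat U \<in> unitary_set"
  by (simp add: unitary_set_def)

lemma unitary_scal_mat: "U \<in> unitary_set \<Longrightarrow> cmod c = 1 \<Longrightarrow> scal_mat c U \<in> unitary_set"
  by (simp add: unitary_set_iff unitary_setD adjoint_mat_scal_mat mult_cnj_self_eq_1)

lemma unitary_neq_0: "U \<in> unitary_set \<Longrightarrow> U \<noteq> 0"
  using mat_1_neq_0 by (auto simp: unitary_set_def)

lemma det_unitary_conj:
  assumes "R \<in> unitary_set"
  shows "det (adjoint_mat R ** U ** R) = det U"
proof -
  have "det (adjoint_mat R ** U ** R) = det (adjoint_mat R ** R) * det U"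
    by (simp add: det_mul)
  then show ?thesis
    using assms by (simp add: unitary_setD)
qed

section \<open>The projective unitary group\<close>

lemma pclass_iff: "W \<in> pclass U \<longleftrightarrow> (\<exists>c. cmod c = 1 \<and> W = scal_mat c U)"
  unfolding pclass_def by blast

lemma pclass_self [simp]: "U \<in> pclass U"
  unfolding pclass_iff by (rule exI[of _ 1]) simp

lemma pclass_scal_mat:
  assumes "cmod c = 1"
  shows "pclass (scal_mat c U) = pclass U"
proof -
  have "scal_mat d U = scal_mat (d * cnj c) (scal_mat c U)" for d
    using assms by (simp add: mult.assoc cnj_mult_self_eq_1)
  then show ?thesis
    using assms unfolding pclass_def by (fastforce simp: norm_mult)
qed

lemma pclass_eq_if_mem: "W \<in> pclass U \<Longrightarrow> pclass W = pclass U"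
  by (auto simp: pclass_iff pclass_scal_mat)

lemma pclass_in_PU_set: "U \<in> unitary_set \<Longrightarrow> pclass U \<in> PU_set"
  unfolding PU_set_def by blast

lemma PU_set_eq_pclass: "V \<in> PU_set \<Longrightarrow> U \<in> V \<Longrightarrow> V = pclass U"
  unfolding PU_set_def using pclass_eq_if_mem by blast

lemma PU_set_mem_unitary: "V \<in> PU_set \<Longrightarrow> U \<in> V \<Longrightarrow> U \<in> unitary_set"
  unfolding PU_set_def by (auto simp: pclass_iff unitary_scal_mat)

lemma PU_set_some_mem: "V \<in> PU_set \<Longrightarrow> (SOME U. U \<in> V) \<in> V"
  unfolding PU_set_def by (metis imageE pclass_self someI)

lemma conj_eq_scal_mat_pclass:
  assumes "adjoint_mat R ** U ** R = scal_mat c U" and "W \<in> pclass U"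
  shows "adjoint_mat R ** W ** R = scal_mat c W"
  using assms by (auto simp: pclass_iff mult.commute)

section \<open>Symmetric projective unitaries and their characters\<close>

lemma sym_PU_subset_PU_set: "sym_PU G \<rho> \<subseteq> PU_set"
  unfolding sym_PU_def by blast

lemma sym_PU_obtain_lift:
  assumes "V \<in> sym_PU G \<rho>"
  obtains U where "U \<in> unitary_set" "U \<in> V" "V = pclass U"
  using assms unfolding sym_PU_def PU_set_def by auto

lemma sym_PU_conj_eq_scal_mat:
  assumes "V \<in> sym_PU G \<rho>" "U \<in> V" "g \<in> carrier G" "\<rho> g \<in> unitary_set"
  obtains c where "cmod c = 1" "adjoint_mat (\<rho> g) ** U ** \<rho> g = scal_mat c U"
proof -
  have "pclass (U ** \<rho> g) = pclass (\<rho> g ** U)"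
    using assms unfolding sym_PU_def by blast
  then obtain c where c: "cmod c = 1" "U ** \<rho> g = scal_mat c (\<rho> g ** U)"
    by (metis pclass_iff pclass_self)
  have "adjoint_mat (\<rho> g) ** U ** \<rho> g = adjoint_mat (\<rho> g) ** (U ** \<rho> g)"
    by (simp add: matrix_mul_assoc)
  also have "\<dots> = scal_mat c U"
    using c(2) assms(4) by (simp add: unitary_cancel)
  finally show thesis
    using c(1) that by blast
qed

lemma pclass_in_sym_PU:
  assumes U: "U \<in> unitary_set"
    and \<rho>: "\<And>g. g \<in> carrier G \<Longrightarrow> \<rho> g \<in> unitary_set"
    and conj: "\<And>g. g \<in> carrier G \<Longrightarrow> \<exists>c. cmod c = 1 \<and> adjoint_mat (\<rho> g) ** U ** \<rho> g = scal_mat c U"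
  shows "pclass U \<in> sym_PU G \<rho>"
  unfolding sym_PU_def
proof (intro CollectI conjI ballI)
  show "pclass U \<in> PU_set"
    using U by (rule pclass_in_PU_set)
  fix g W assume g: "g \<in> carrier G" and W: "W \<in> pclass U"
  obtain c where c: "cmod c = 1" "adjoint_mat (\<rho> g) ** U ** \<rho> g = scal_mat c U"
    using conj[OF g] by blast
  have "W ** \<rho> g = \<rho> g ** (adjoint_mat (\<rho> g) ** W ** \<rho> g)"
    using \<rho>[OF g] by (simp add: unitary_cancel flip: matrix_mul_assoc)
  also have "\<dots> = scal_mat c (\<rho> g ** W)"
    using conj_eq_scal_mat_pclass[OF c(2) W] by simp
  finally show "pclass (W ** \<rho> g) = pclass (\<rho> g ** W)"
    using pclass_scal_mat[OF c(1)] by simp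
qed

lemma chiV_conj:
  assumes V: "V \<in> sym_PU G \<rho>" and U: "U \<in> V" and g: "g \<in> carrier G"
    and \<rho>: "\<rho> g \<in> unitary_set"
  shows "adjoint_mat (\<rho> g) ** U ** \<rho> g = scal_mat (chiV G \<rho> V g) U"
    and "cmod (chiV G \<rho> V g) = 1"
proof -
  have VPU: "V \<in> PU_set"
    using V sym_PU_subset_PU_set by blast
  define U' where "U' = (SOME U. U \<in> V)"
  have U': "U' \<in> V"
    unfolding U'_def using VPU by (rule PU_set_some_mem)
  obtain c where c: "cmod c = 1" "adjoint_mat (\<rho> g) ** U' ** \<rho> g = scal_mat c U'"
    using sym_PU_conj_eq_scal_mat[OF V U' g \<rho>] .
  have "U' \<noteq> 0"
    using PU_set_mem_unitary[OF VPU U'] unitary_neq_0 by blast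
  then have "chiV G \<rho> V g = c"
    using g c(2) unfolding chiV_def U'_def[symmetric]
    by (auto intro: the_equality simp: scal_mat_cancel_left)
  moreover have "U \<in> pclass U'"
    using PU_set_eq_pclass[OF VPU U'] U by simp
  ultimately show "adjoint_mat (\<rho> g) ** U ** \<rho> g = scal_mat (chiV G \<rho> V g) U"
    and "cmod (chiV G \<rho> V g) = 1"
    using conj_eq_scal_mat_pclass[OF c(2)] c(1) by auto
qed

lemma chiV_eqI:
  assumes "V \<in> sym_PU G \<rho>" "U \<in> V" "g \<in> carrier G" "\<rho> g \<in> unitary_set"
    and "adjoint_mat (\<rho> g) ** U ** \<rho> g = scal_mat c U"
  shows "chiV G \<rho> V g = c"
proof -
  have "U \<noteq> 0"
    using assms(1,2) sym_PU_subset_PU_set PU_set_mem_unitary unitary_neq_0 by blast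
  then show ?thesis
    using chiV_conj(1)[OF assms(1-4)] assms(5) by (simp add: scal_mat_cancel_left)
qed

lemma unitary_repD:
  assumes "unitary_rep G T \<rho>"
  shows "continuous_map T euclidean \<rho>"
    and "g \<in> carrier G \<Longrightarrow> \<rho> g \<in> unitary_set"
    and "g \<in> carrier G \<Longrightarrow> h \<in> carrier G \<Longrightarrow> \<rho> (g \<otimes>\<^bsub>G\<^esub> h) = \<rho> g ** \<rho> h"
  using assms unfolding unitary_rep_def by blast+

lemma chiV_character:
  assumes tg: "topological_group G T" and rep: "unitary_rep G T \<rho>" and V: "V \<in> sym_PU G \<rho>"
  shows "character G T (chiV G \<rho> V)"
proof -
  have VPU: "V \<in> PU_set"
    using V sym_PU_subset_PU_set by blast
  define U where "U = (SOME U. U \<in> V)"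
  have U: "U \<in> V"
    unfolding U_def using VPU by (rule PU_set_some_mem)
  have conj: "adjoint_mat (\<rho> g) ** U ** \<rho> g = scal_mat (chiV G \<rho> V g) U"
    and norm: "cmod (chiV G \<rho> V g) = 1" if "g \<in> carrier G" for g
    using chiV_conj[OF V U that unitary_repD(2)[OF rep that]] by blast+
  obtain i j where ij: "U $ i $ j \<noteq> 0"
    using unitary_neq_0[OF PU_set_mem_unitary[OF VPU U]] by (auto simp: vec_eq_iff)
  define F where "F A = (adjoint_mat A ** U ** A) $ i $ j / U $ i $ j" for A
  have "continuous_on UNIV F"
    unfolding F_def by (intro continuous_intros) (use ij in auto)
  then have "continuous_map T euclidean (F \<circ> \<rho>)"
    using unitary_repD(1)[OF rep] by (intro continuous_map_compose) auto
  moreover have "(F \<circ> \<rho>) g = chiV G \<rho> V g" if "g \<in> topspace T" for g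
    using that tg conj ij unfolding topological_group_def F_def by simp
  ultimately have cont: "continuous_map T euclidean (chiV G \<rho> V)"
    by (rule continuous_map_eq)
  have "chiV G \<rho> V (g \<otimes>\<^bsub>G\<^esub> h) = chiV G \<rho> V g * chiV G \<rho> V h"
    if g: "g \<in> carrier G" and h: "h \<in> carrier G" for g h
  proof (rule chiV_eqI[OF V U])
    show gh: "g \<otimes>\<^bsub>G\<^esub> h \<in> carrier G"
      using tg g h unfolding topological_group_def by (simp add: group.is_monoid monoid.m_closed)
    show "\<rho> (g \<otimes>\<^bsub>G\<^esub> h) \<in> unitary_set"
      using unitary_repD(2)[OF rep gh] .
    have "adjoint_mat (\<rho> (g \<otimes>\<^bsub>G\<^esub> h)) ** U ** \<rho> (g \<otimes>\<^bsub>G\<^esub> h)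
        = adjoint_mat (\<rho> h) ** (adjoint_mat (\<rho> g) ** U ** \<rho> g) ** \<rho> h"
      using unitary_repD(3)[OF rep g h] by (simp add: adjoint_mat_mult matrix_mul_assoc)
    then show "adjoint_mat (\<rho> (g \<otimes>\<^bsub>G\<^esub> h)) ** U ** \<rho> (g \<otimes>\<^bsub>G\<^esub> h)
        = scal_mat (chiV G \<rho> V g * chiV G \<rho> V h) U"
      using conj[OF g] conj[OF h] by (simp add: mult.commute)
  qed
  then show ?thesis
    unfolding character_def using cont norm by blast
qed

lemma chiV_power_card:
  fixes \<rho> :: "'g \<Rightarrow> complex^'n^'n"
  assumes V: "V \<in> sym_PU G \<rho>" and g: "g \<in> carrier G" and \<rho>: "\<rho> g \<in> unitary_set"
  shows "chiV G \<rho> V g ^ CARD('n) = 1"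
proof -
  have VPU: "V \<in> PU_set"
    using V sym_PU_subset_PU_set by blast
  obtain U where U: "U \<in> V"
    using PU_set_some_mem[OF VPU] by blast
  have "U \<in> unitary_set"
    using PU_set_mem_unitary[OF VPU U] .
  then have "det (adjoint_mat U) * det U = 1"
    by (metis det_I det_mul unitary_setD(1))
  then have "det U \<noteq> 0"
    by auto
  moreover have "chiV G \<rho> V g ^ CARD('n) * det U = det U"
    using det_unitary_conj[OF \<rho>, of U] chiV_conj(1)[OF V U g \<rho>] by (simp add: det_scal_mat)
  ultimately show ?thesis
    by simp
qed

section \<open>Tensor products\<close>

lemma kron_nth [simp]: "kron A B $ p $ q = A $ fst p $ fst q * B $ snd p $ snd q"
  by (simp add: kron_def)

lemma kron_mult: "kron A B ** kron C D = kron (A ** C) (B ** D)"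
proof -
  have "(\<Sum>k\<in>UNIV. A $ i $ fst k * B $ i' $ snd k * (C $ fst k $ j * D $ snd k $ j'))
      = (\<Sum>k\<in>UNIV. A $ i $ k * C $ k $ j) * (\<Sum>k\<in>UNIV. B $ i' $ k * D $ k $ j')" for i i' j j'
    unfolding sum_product sum.cartesian_product UNIV_Times_UNIV[symmetric]
    by (simp add: split_beta mult_ac)
  then show ?thesis
    by (simp add: vec_eq_iff matrix_mult_nth)
qed

lemma kron_adjoint_mat: "adjoint_mat (kron A B) = kron (adjoint_mat A) (adjoint_mat B)"
  by (simp add: vec_eq_iff)

lemma kron_scal_mat: "kron (scal_mat c A) (scal_mat d B) = scal_mat (c * d) (kron A B)"
  by (simp add: vec_eq_iff mult_ac)

lemma kron_one: "kron (mat 1 :: complex^'n^'n) (mat 1 :: complex^'m^'m) = mat 1"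
  by (auto simp: vec_eq_iff mat_def prod_eq_iff)

lemma unitary_kron: "U \<in> unitary_set \<Longrightarrow> W \<in> unitary_set \<Longrightarrow> kron U W \<in> unitary_set"
  by (simp add: unitary_set_def kron_adjoint_mat kron_mult kron_one)

lemma kron_conj:
  "adjoint_mat (kron R S) ** kron U W ** kron R S
     = kron (adjoint_mat R ** U ** R) (adjoint_mat S ** W ** S)"
  by (simp add: kron_adjoint_mat kron_mult)

lemma ptensor_pclass: "ptensor (pclass U) (pclass W) = pclass (kron U W)"
proof (rule Set.set_eqI)
  fix X
  have "X \<in> ptensor (pclass U) (pclass W)
      \<longleftrightarrow> (\<exists>a b. cmod a = 1 \<and> cmod b = 1 \<and> X = scal_mat (a * b) (kron U W))"
    unfolding ptensor_def pclass_iff by (force simp: kron_scal_mat)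
  also have "\<dots> \<longleftrightarrow> X \<in> pclass (kron U W)"
    unfolding pclass_iff by (metis mult_1_right norm_mult norm_one)
  finally show "X \<in> ptensor (pclass U) (pclass W) \<longleftrightarrow> X \<in> pclass (kron U W)" .
qed

lemma ptensor_sym_PU:
  assumes \<rho>: "\<And>g. g \<in> carrier G \<Longrightarrow> \<rho> g \<in> unitary_set"
    and \<sigma>: "\<And>g. g \<in> carrier G \<Longrightarrow> \<sigma> g \<in> unitary_set"
    and V: "V \<in> sym_PU G \<rho>" and Q: "Q \<in> sym_PU G \<sigma>"
  shows "ptensor V Q \<in> sym_PU G (tensor_rep \<rho> \<sigma>)"
    and "g \<in> carrier G \<Longrightarrow> chiV G (tensor_rep \<rho> \<sigma>) (ptensor V Q) g = chiV G \<rho> V g * chiV G \<sigma> Q g"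
proof -
  obtain U where U: "U \<in> unitary_set" "U \<in> V" "V = pclass U"
    using V by (rule sym_PU_obtain_lift)
  obtain W where W: "W \<in> unitary_set" "W \<in> Q" "Q = pclass W"
    using Q by (rule sym_PU_obtain_lift)
  have VQ: "ptensor V Q = pclass (kron U W)"
    using U W ptensor_pclass by simp
  have \<tau>: "tensor_rep \<rho> \<sigma> g \<in> unitary_set" if "g \<in> carrier G" for g
    unfolding tensor_rep_def using \<rho>[OF that] \<sigma>[OF that] by (rule unitary_kron)
  have conj: "adjoint_mat (tensor_rep \<rho> \<sigma> g) ** kron U W ** tensor_rep \<rho> \<sigma> g
      = scal_mat (chiV G \<rho> V g * chiV G \<sigma> Q g) (kron U W)" if g: "g \<in> carrier G" for g
    unfolding tensor_rep_def kron_conj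
    using chiV_conj(1)[OF V U(2) g \<rho>[OF g]] chiV_conj(1)[OF Q W(2) g \<sigma>[OF g]]
    by (simp add: kron_scal_mat)
  show mem: "ptensor V Q \<in> sym_PU G (tensor_rep \<rho> \<sigma>)"
    unfolding VQ
  proof (rule pclass_in_sym_PU[OF unitary_kron[OF U(1) W(1)] \<tau>])
    fix g assume g: "g \<in> carrier G"
    have "cmod (chiV G \<rho> V g * chiV G \<sigma> Q g) = 1"
      using chiV_conj(2)[OF V U(2) g \<rho>[OF g]] chiV_conj(2)[OF Q W(2) g \<sigma>[OF g]]
      by (simp add: norm_mult)
    then show "\<exists>c. cmod c = 1 \<and> adjoint_mat (tensor_rep \<rho> \<sigma> g) ** kron U W ** tensor_rep \<rho> \<sigma> g
        = scal_mat c (kron U W)"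
      using conj[OF g] by blast
  qed
  show "chiV G (tensor_rep \<rho> \<sigma>) (ptensor V Q) g = chiV G \<rho> V g * chiV G \<sigma> Q g"
    if "g \<in> carrier G"
    using chiV_eqI[OF mem _ that \<tau>[OF that] conj[OF that]] VQ by simp
qed

lemma pclass_one_sym_PU:
  fixes \<sigma> :: "'g \<Rightarrow> complex^'m^'m"
  assumes \<sigma>: "\<And>g. g \<in> carrier G \<Longrightarrow> \<sigma> g \<in> unitary_set"
  shows "pclass (mat 1) \<in> sym_PU G \<sigma>"
    and "g \<in> carrier G \<Longrightarrow> chiV G \<sigma> (pclass (mat 1)) g = 1"
proof -
  have conj: "adjoint_mat (\<sigma> g) ** mat 1 ** \<sigma> g = scal_mat 1 (mat 1 :: complex^'m^'m)"
    if "g \<in> carrier G" for g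
    using \<sigma>[OF that] by (simp add: unitary_setD)
  show mem: "pclass (mat 1) \<in> sym_PU G \<sigma>"
    using unitary_one \<sigma> conj by (intro pclass_in_sym_PU) (auto intro!: exI[of _ 1])
  show "chiV G \<sigma> (pclass (mat 1)) g = 1" if "g \<in> carrier G"
    using chiV_eqI[OF mem pclass_self that \<sigma>[OF that] conj[OF that]] .
qed

section \<open>Torsion characters\<close>

definition diag_mat :: "('k::finite \<Rightarrow> complex) \<Rightarrow> complex^'k^'k" where
  "diag_mat d = (\<chi> i j. if i = j then d i else 0)"

lemma diag_mat_mult_left: "diag_mat d ** X = (\<chi> i j. d i * X $ i $ j)"
  by (simp add: vec_eq_iff matrix_mult_nth diag_mat_def if_distrib[of "\<lambda>x. x * _"] cong: if_cong)

lemma diag_mat_mult_right: "X ** diag_mat d = (\<chi> i j. X $ i $ j * d j)"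
  by (simp add: vec_eq_iff matrix_mult_nth diag_mat_def if_distrib[of "\<lambda>x. _ * x"] cong: if_cong)

lemma adjoint_diag_mat: "adjoint_mat (diag_mat d) = diag_mat (\<lambda>i. cnj (d i))"
  by (auto simp: vec_eq_iff diag_mat_def)

lemma unitary_diag_mat: "(\<And>i. cmod (d i) = 1) \<Longrightarrow> diag_mat d \<in> unitary_set"
  unfolding unitary_set_iff adjoint_diag_mat diag_mat_mult_left
  by (auto simp: vec_eq_iff diag_mat_def mat_def cnj_mult_self_eq_1)

lemma diag_powers_rep_eq: "diag_powers_rep e \<psi> g = diag_mat (\<lambda>i. \<psi> g ^ e i)"
  by (simp add: diag_powers_rep_def diag_mat_def)

definition perm_mat :: "('k::finite \<Rightarrow> 'k) \<Rightarrow> complex^'k^'k" where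
  "perm_mat f = (\<chi> i j. if j = f i then 1 else 0)"

lemma unitary_perm_mat:
  assumes "inj f"
  shows "perm_mat f \<in> unitary_set"
proof -
  have "(\<Sum>k\<in>UNIV. (if k = f i then 1 else 0) * cnj (if k = f j then 1 else (0::complex)))
      = (if i = j then 1 else 0)" for i j
    using assms by (simp add: if_distrib[of "\<lambda>x. x * _"] inj_eq cong: if_cong)
  then have "perm_mat f ** adjoint_mat (perm_mat f) = mat 1"
    by (simp add: vec_eq_iff matrix_mult_nth perm_mat_def mat_def)
  then show ?thesis
    unfolding unitary_set_def using matrix_left_right_inverse by blast
qed

lemma power_mod_eq_power:
  assumes "z ^ n = (1 :: 'a::monoid_mult)"
  shows "z ^ (m mod n) = z ^ m"
proof -
  have "z ^ m = (z ^ n) ^ (m div n) * z ^ (m mod n)"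
    by (metis div_mult_mod_eq power_add power_mult mult.commute)
  then show ?thesis
    using assms by simp
qed

lemma cyclic_successor_exists:
  assumes "bij_betw e (UNIV :: 'k::finite set) {..<CARD('k)}"
  obtains f where "inj f" "\<And>i. e (f i) = Suc (e i) mod CARD('k)"
proof
  define f where "f i = inv_into UNIV e (Suc (e i) mod CARD('k))" for i
  show ef: "e (f i) = Suc (e i) mod CARD('k)" for i
    unfolding f_def using assms by (intro f_inv_into_f) (auto simp: bij_betw_def)
  show "inj f"
  proof (rule injI)
    fix i j assume "f i = f j"
    then have "Suc (e i) mod CARD('k) = Suc (e j) mod CARD('k)"
      using ef by metis
    moreover have "e i < CARD('k)" "e j < CARD('k)"
      using assms by (auto simp: bij_betw_def)
    ultimately have "e i = e j"
      by (simp add: mod_Suc split: if_splits)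
    then show "i = j"
      using assms by (simp add: bij_betw_def inj_eq)
  qed
qed

text \<open>The hypothesis \<open>z ^ CARD('k) = 1\<close> is what makes the wrap-around entry of the shift
  behave like the others.\<close>

lemma diag_powers_conj_perm_mat:
  fixes e :: "'k::finite \<Rightarrow> nat"
  assumes z: "cmod z = 1" "z ^ CARD('k) = 1" and f: "\<And>i. e (f i) = Suc (e i) mod CARD('k)"
  shows "adjoint_mat (diag_mat (\<lambda>i. z ^ e i)) ** perm_mat f ** diag_mat (\<lambda>i. z ^ e i)
    = scal_mat z (perm_mat f)"
proof -
  have "cnj (z ^ e i) * z ^ e (f i) = z" for i
  proof -
    have "cnj (z ^ e i) * z ^ e (f i) = (cnj z * z) ^ e i * z"
      using f power_mod_eq_power[OF z(2)] by (simp add: power_mult_distrib mult_ac)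
    then show ?thesis
      using cnj_mult_self_eq_1[OF z(1)] by simp
  qed
  then show ?thesis
    by (auto simp: vec_eq_iff adjoint_diag_mat diag_mat_mult_left diag_mat_mult_right perm_mat_def)
qed

lemma torsion_character_attained:
  fixes \<psi> :: "'g \<Rightarrow> complex" and e :: "'k::finite \<Rightarrow> nat"
  assumes \<psi>: "\<And>g. g \<in> carrier G \<Longrightarrow> \<psi> g ^ CARD('k) = 1"
    and e: "bij_betw e UNIV {..<CARD('k)}"
  shows "\<exists>V\<in>sym_PU G (diag_powers_rep e \<psi>). \<forall>g\<in>carrier G. chiV G (diag_powers_rep e \<psi>) V g = \<psi> g"
proof -
  obtain f where f: "inj f" "\<And>i. e (f i) = Suc (e i) mod CARD('k)"
    using cyclic_successor_exists[OF e] by blast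
  have norm: "cmod (\<psi> g) = 1" if "g \<in> carrier G" for g
    using power_eq_1_iff[OF \<psi>[OF that]] by simp
  have D: "diag_powers_rep e \<psi> g \<in> unitary_set" if "g \<in> carrier G" for g
    unfolding diag_powers_rep_eq using norm[OF that]
    by (intro unitary_diag_mat) (simp add: norm_power)
  have conj: "adjoint_mat (diag_powers_rep e \<psi> g) ** perm_mat f ** diag_powers_rep e \<psi> g
      = scal_mat (\<psi> g) (perm_mat f)" if "g \<in> carrier G" for g
    unfolding diag_powers_rep_eq using norm[OF that] \<psi>[OF that] f(2)
    by (rule diag_powers_conj_perm_mat)
  have mem: "pclass (perm_mat f) \<in> sym_PU G (diag_powers_rep e \<psi>)"
    using unitary_perm_mat[OF f(1)] D conj norm by (intro pclass_in_sym_PU) blast+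
  show ?thesis
    using chiV_eqI[OF mem pclass_self _ D conj] mem by blast
qed

section \<open>The character is constant along paths\<close>

lemma path_component_of_imp_eq_if_finite_closed_fibres:
  assumes fin: "finite (f ` topspace X)"
    and closed: "\<And>c. closedin X {x \<in> topspace X. f x = c}"
    and path: "path_component_of X x y"
  shows "f x = f y"
proof -
  have "continuous_map X (discrete_topology (f ` topspace X)) f"
    unfolding continuous_map_closedin
  proof (intro conjI allI impI)
    fix C assume "closedin (discrete_topology (f ` topspace X)) C"
    then have "finite C"
      using fin by (simp add: finite_subset)
    moreover have "{x \<in> topspace X. f x \<in> C} = (\<Union>c\<in>C. {x \<in> topspace X. f x = c})"
      by blast
    ultimately show "closedin X {x \<in> topspace X. f x \<in> C}"
      using closed by (auto intro: closedin_Union)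
  qed auto
  then show ?thesis
    using path_component_of_continuous_image[OF _ path] by fastforce
qed

lemma openin_PU_top:
  "openin PU_top S \<longleftrightarrow> S \<subseteq> PU_set \<and> openin U_top {U \<in> unitary_set. pclass U \<in> S}"
proof -
  have top: "istopology (\<lambda>S. S \<subseteq> PU_set \<and> openin U_top {U \<in> unitary_set. pclass U \<in> S})"
    unfolding istopology_def
  proof (rule conjI; intro allI impI)
    fix S T :: "(complex^'n^'n) set set"
    assume "S \<subseteq> PU_set \<and> openin U_top {U \<in> unitary_set. pclass U \<in> S}"
      and "T \<subseteq> PU_set \<and> openin U_top {U \<in> unitary_set. pclass U \<in> T}"
    moreover have "{U \<in> unitary_set. pclass U \<in> S \<inter> T}
        = {U \<in> unitary_set. pclass U \<in> S} \<inter> {U \<in> unitary_set. pclass U \<in> T}"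
      by blast
    ultimately show "S \<inter> T \<subseteq> PU_set \<and> openin U_top {U \<in> unitary_set. pclass U \<in> S \<inter> T}"
      by (auto intro: openin_Int)
  next
    fix K :: "(complex^'n^'n) set set set"
    assume "\<forall>S\<in>K. S \<subseteq> PU_set \<and> openin U_top {U \<in> unitary_set. pclass U \<in> S}"
    moreover have "{U \<in> unitary_set. pclass U \<in> \<Union>K} = (\<Union>S\<in>K. {U \<in> unitary_set. pclass U \<in> S})"
      by blast
    ultimately show "\<Union>K \<subseteq> PU_set \<and> openin U_top {U \<in> unitary_set. pclass U \<in> \<Union>K}"
      by (auto intro: openin_Union)
  qed
  show ?thesis
    unfolding PU_top_def topology_inverse'[OF top] ..
qed

lemma topspace_PU_top [simp]: "topspace (PU_top :: (complex^'n^'n) set topology) = PU_set"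
proof -
  have "{U \<in> unitary_set. pclass U \<in> (PU_set :: (complex^'n^'n) set set)} = topspace U_top"
    by (auto simp: U_top_def pclass_in_PU_set)
  then have "openin PU_top (PU_set :: (complex^'n^'n) set set)"
    unfolding openin_PU_top by simp
  then show ?thesis
    using openin_subset openin_topspace openin_PU_top by blast
qed

lemma continuous_map_pclass: "continuous_map U_top PU_top pclass"
  unfolding continuous_map using pclass_in_PU_set openin_PU_top by (auto simp: U_top_def)

lemma closedin_PU_top_conj_fibre:
  fixes R :: "complex^'n^'n"
  shows "closedin PU_top {V \<in> PU_set. \<forall>U\<in>V. adjoint_mat R ** U ** R = scal_mat c U}"
    (is "closedin PU_top ?F")
proof -
  have "{U \<in> unitary_set. pclass U \<in> PU_set - ?F}
      = {U. adjoint_mat R ** U ** R \<noteq> scal_mat c U} \<inter> unitary_set"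
    by (auto simp: pclass_in_PU_set dest: conj_eq_scal_mat_pclass)
  moreover have "open {U. adjoint_mat R ** U ** R \<noteq> scal_mat c U}"
    by (intro open_Collect_neq continuous_intros)
  ultimately have "openin PU_top (PU_set - ?F)"
    unfolding openin_PU_top U_top_def openin_subtopology by auto
  then show ?thesis
    by (simp add: closedin_def Collect_mono)
qed

lemma chiV_eq_if_path_component:
  fixes \<rho> :: "'g \<Rightarrow> complex^'n^'n"
  assumes \<rho>: "\<And>g. g \<in> carrier G \<Longrightarrow> \<rho> g \<in> unitary_set"
    and path: "path_component_of (subtopology PU_top (sym_PU G \<rho>)) V W"
    and g: "g \<in> carrier G"
  shows "chiV G \<rho> V g = chiV G \<rho> W g"
proof (rule path_component_of_imp_eq_if_finite_closed_fibres[OF _ _ path])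
  let ?X = "subtopology PU_top (sym_PU G \<rho>)"
  have top: "topspace ?X = sym_PU G \<rho>"
    using sym_PU_subset_PU_set by (auto simp: topspace_subtopology)
  have "(\<lambda>V. chiV G \<rho> V g) ` topspace ?X \<subseteq> {z. z ^ CARD('n) = 1}"
    using chiV_power_card[where g = g] g \<rho>[OF g] top by auto
  then show "finite ((\<lambda>V. chiV G \<rho> V g) ` topspace ?X)"
    by (rule finite_subset) (simp add: finite_roots_unity)
  fix c
  have fibre: "chiV G \<rho> V g = c \<longleftrightarrow> (\<forall>U\<in>V. adjoint_mat (\<rho> g) ** U ** \<rho> g = scal_mat c U)"
    if V: "V \<in> sym_PU G \<rho>" for V
  proof
    show "chiV G \<rho> V g = c \<Longrightarrow> \<forall>U\<in>V. adjoint_mat (\<rho> g) ** U ** \<rho> g = scal_mat c U"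
      using chiV_conj(1)[OF V _ g \<rho>[OF g]] by blast
    have "(SOME U. U \<in> V) \<in> V"
      using V sym_PU_subset_PU_set PU_set_some_mem by blast
    then show "\<forall>U\<in>V. adjoint_mat (\<rho> g) ** U ** \<rho> g = scal_mat c U \<Longrightarrow> chiV G \<rho> V g = c"
      using chiV_eqI[OF V _ g \<rho>[OF g]] by blast
  qed
  have "{V \<in> topspace ?X. chiV G \<rho> V g = c}
      = sym_PU G \<rho> \<inter> {V \<in> PU_set. \<forall>U\<in>V. adjoint_mat (\<rho> g) ** U ** \<rho> g = scal_mat c U}"
    using top fibre sym_PU_subset_PU_set by auto
  then show "closedin ?X {V \<in> topspace ?X. chiV G \<rho> V g = c}"
    by (simp add: closedin_subtopology_Int_closed closedin_PU_top_conj_fibre)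
qed

section \<open>Eigenvalues and compactness of the unitary group\<close>

definition cinner :: "complex^'n \<Rightarrow> complex^'n \<Rightarrow> complex" where
  "cinner x y = (\<Sum>i\<in>UNIV. cnj (x $ i) * y $ i)"

lemma inner_eq_Re_cinner: "inner x y = Re (cinner x y)"
  by (simp add: inner_vec_def cinner_def inner_complex_def Re_sum)

lemma cinner_matrix_vector_mult_left: "cinner (A *v x) y = cinner x (adjoint_mat A *v y)"
proof -
  have "cinner (A *v x) y = (\<Sum>i\<in>UNIV. \<Sum>j\<in>UNIV. cnj (A $ i $ j) * cnj (x $ j) * y $ i)"
    by (simp add: cinner_def matrix_vector_mult_def sum_distrib_right)
  also have "\<dots> = (\<Sum>j\<in>UNIV. \<Sum>i\<in>UNIV. cnj (A $ i $ j) * cnj (x $ j) * y $ i)"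
    by (rule sum.swap)
  also have "\<dots> = cinner x (adjoint_mat A *v y)"
    by (simp add: cinner_def matrix_vector_mult_def sum_distrib_left mult_ac)
  finally show ?thesis .
qed

lemma cinner_unitary: "M \<in> unitary_set \<Longrightarrow> cinner (M *v x) (M *v y) = cinner x y"
  by (simp add: cinner_matrix_vector_mult_left matrix_vector_mul_assoc unitary_setD)

lemma cinner_smult: "cinner (a *s x) (b *s y) = cnj a * b * cinner x y"
  by (simp add: cinner_def sum_distrib_left mult_ac)

lemma norm_unitary_mult: "M \<in> unitary_set \<Longrightarrow> norm (M *v x) = norm (x :: complex^'n)"
  by (simp add: norm_eq_sqrt_inner inner_eq_Re_cinner cinner_unitary)

lemma unitary_eigenvectors_orthogonal:
  assumes M: "M \<in> unitary_set" and x: "M *v x = a *s x" and y: "M *v y = b *s y"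
    and a: "cmod a = 1" and ab: "a \<noteq> b"
  shows "cinner x y = 0"
proof (rule ccontr)
  assume "cinner x y \<noteq> 0"
  moreover have "cinner x y = cnj a * b * cinner x y"
    using cinner_unitary[OF M, of x y] x y by (simp add: cinner_smult)
  ultimately have "cnj a * b = 1"
    by simp
  then have "a * (cnj a * b) = a"
    by simp
  then have "b = a"
    using mult_cnj_self_eq_1[OF a] by (simp add: mult.assoc flip: mult.assoc)
  then show False
    using ab by simp
qed

lemma infinite_unit_circle: "infinite {z :: complex. cmod z = 1}"
proof
  assume fin: "finite {z :: complex. cmod z = 1}"
  define f where "f t = Complex t (sqrt (1 - t\<^sup>2))" for t
  have "f ` {-1..1} \<subseteq> {z. cmod z = 1}"
    by (auto simp: f_def cmod_def abs_square_le_1)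
  moreover have "inj_on f {-1..1}"
    unfolding inj_on_def f_def by simp
  ultimately have "finite {-1..1 :: real}"
    using fin by (meson finite_subset finite_imageD)
  then show False
    using infinite_Icc[of "-1 :: real" 1] by simp
qed

text \<open>Eigenvectors for distinct eigenvalues are orthogonal, hence linearly independent,
  so a unitary matrix has only finitely many eigenvalues on the infinite unit circle.\<close>

lemma unitary_non_eigenvalue_exists:
  fixes M :: "complex^'n^'n"
  assumes M: "M \<in> unitary_set"
  shows "\<exists>a. cmod a = 1 \<and> (\<forall>x. M *v x = a *s x \<longrightarrow> x = 0)"
proof (rule ccontr)
  define C where "C = {z :: complex. cmod z = 1}"
  assume "\<not> ?thesis"
  then have "\<exists>x. x \<noteq> 0 \<and> M *v x = a *s x" if "a \<in> C" for a
    using that unfolding C_def by blast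
  then obtain v where v: "\<And>a. a \<in> C \<Longrightarrow> v a \<noteq> 0" "\<And>a. a \<in> C \<Longrightarrow> M *v v a = a *s v a"
    by metis
  have inj: "inj_on v C"
  proof (rule inj_onI)
    fix a b assume a: "a \<in> C" and b: "b \<in> C" and eq: "v a = v b"
    have "a *s v a = b *s v a"
      using v(2)[OF a] v(2)[OF b] eq by metis
    then show "a = b"
      using v(1)[OF a] by simp
  qed
  have "pairwise orthogonal (v ` C)"
  proof (rule pairwiseI)
    fix x y assume "x \<in> v ` C" "y \<in> v ` C" "x \<noteq> y"
    then obtain a b where ab: "a \<in> C" "b \<in> C" "x = v a" "y = v b" "a \<noteq> b"
      by blast
    then have "cinner x y = 0"
      using unitary_eigenvectors_orthogonal[OF M v(2) v(2)] unfolding C_def by blast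
    then show "orthogonal x y"
      by (simp add: orthogonal_def inner_eq_Re_cinner)
  qed
  moreover have "0 \<notin> v ` C"
    using v(1) by force
  ultimately have "finite (v ` C)"
    using pairwise_orthogonal_independent independent_bound by blast
  then show False
    using finite_imageD[OF _ inj] infinite_unit_circle unfolding C_def by blast
qed

lemma norm_row_unitary:
  assumes "(U :: complex^'n^'n) \<in> unitary_set"
  shows "norm (U $ i) = 1"
proof -
  have "cinner (U $ i) (U $ i) = (U ** adjoint_mat U) $ i $ i"
    by (simp add: cinner_def matrix_mult_nth mult.commute)
  then have "norm (U $ i) ^ 2 = 1"
    using assms by (simp add: unitary_setD mat_def power2_norm_eq_inner inner_eq_Re_cinner)
  then show ?thesis
    using norm_ge_zero[of "U $ i"] by (simp add: power2_eq_1_iff)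
qed

lemma compact_unitary_set: "compact (unitary_set :: (complex^'n^'n) set)"
proof -
  have "closed {U :: complex^'n^'n. adjoint_mat U ** U = mat 1}"
    by (intro closed_Collect_eq continuous_intros)
  moreover have "unitary_set = {U :: complex^'n^'n. adjoint_mat U ** U = mat 1}"
    using unitary_set_iff by blast
  ultimately have "closed (unitary_set :: (complex^'n^'n) set)"
    by simp
  moreover have "norm U \<le> real CARD('n)" if "U \<in> unitary_set" for U :: "complex^'n^'n"
  proof -
    have "norm U = L2_set (\<lambda>i. norm (U $ i)) UNIV"
      by (simp add: norm_vec_def)
    also have "\<dots> \<le> (\<Sum>i\<in>UNIV. norm (U $ i))"
      by (rule L2_set_le_sum) simp
    finally show ?thesis
      using norm_row_unitary[OF that] by simp
  qed
  then have "bounded (unitary_set :: (complex^'n^'n) set)"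
    unfolding bounded_iff by blast
  ultimately show ?thesis
    by (simp add: compact_eq_bounded_closed)
qed

section \<open>Cayley paths\<close>

lemma matrix_inv_mult:
  fixes A :: "'a::field^'n^'n"
  assumes "invertible A"
  shows "A ** matrix_inv A = mat 1" and "matrix_inv A ** A = mat 1"
  using someI_ex[OF assms[unfolded invertible_def]] unfolding matrix_inv_def by blast+

lemma mult_eq_iff_eq_mult_matrix_inv:
  fixes C :: "'a::field^'n^'n"
  assumes "invertible C"
  shows "Y ** C = B \<longleftrightarrow> Y = B ** matrix_inv C"
proof
  assume "Y ** C = B"
  then show "Y = B ** matrix_inv C"
    using matrix_inv_mult(1)[OF assms] by (metis matrix_mul_assoc matrix_mul_rid)
next
  assume "Y = B ** matrix_inv C"
  then show "Y ** C = B"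
    using matrix_inv_mult(2)[OF assms] by (metis matrix_mul_assoc matrix_mul_rid)
qed

definition lincomb_one :: "real \<Rightarrow> real \<Rightarrow> complex^'n^'n \<Rightarrow> complex^'n^'n" where
  "lincomb_one a b K = scal_mat (of_real a) (mat 1) + scal_mat (of_real b) K"

lemma lincomb_one_mult_vector: "lincomb_one a b K *v x = a *\<^sub>R x + b *\<^sub>R (K *v x)"
  by (simp add: lincomb_one_def matrix_vector_mult_add_rdistrib scal_mat_mult_vector vec_eq_iff)
    (simp add: scaleR_conv_of_real)

lemma lincomb_one_commute: "K ** R = R ** K \<Longrightarrow> lincomb_one a b K ** R = R ** lincomb_one a b K"
  by (simp add: lincomb_one_def matrix_add_ldistrib matrix_add_rdistrib)

lemma continuous_on_lincomb_one [continuous_intros]: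
  "continuous_on S a \<Longrightarrow> continuous_on S b \<Longrightarrow> continuous_on S (\<lambda>x. lincomb_one (a x) (b x) K)"
  unfolding lincomb_one_def by (intro continuous_intros)

lemma gram_lincomb_one_swap:
  assumes "K \<in> unitary_set"
  shows "adjoint_mat (lincomb_one a b K) ** lincomb_one a b K
    = adjoint_mat (lincomb_one b a K) ** lincomb_one b a K"
proof -
  have gram: "adjoint_mat (lincomb_one a b K) ** lincomb_one a b K
      = scal_mat (of_real (a * a + b * b)) (mat 1) + scal_mat (of_real (a * b)) (K + adjoint_mat K)"
    for a b
    using assms unfolding lincomb_one_def
    by (simp add: adjoint_mat_add adjoint_mat_scal_mat matrix_add_ldistrib matrix_add_rdistrib
        unitary_setD scal_mat_add_left scal_mat_add_right add_ac mult_ac)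
  show ?thesis
    unfolding gram by (simp add: add.commute mult.commute)
qed

lemma matrix_inv_commute:
  fixes C :: "'a::field^'n^'n"
  assumes "invertible C" and "C ** R = R ** C"
  shows "matrix_inv C ** R = R ** matrix_inv C"
proof -
  have "matrix_inv C ** R = matrix_inv C ** (R ** C) ** matrix_inv C"
    using matrix_inv_mult(1)[OF assms(1)] by (simp flip: matrix_mul_assoc)
  also have "\<dots> = (matrix_inv C ** C) ** R ** matrix_inv C"
    using assms(2) by (metis matrix_mul_assoc)
  also have "\<dots> = R ** matrix_inv C"
    using matrix_inv_mult(2)[OF assms(1)] by simp
  finally show ?thesis .
qed

lemma unitary_if_mult_eq_same_gram:
  fixes C :: "complex^'n^'n"
  assumes C: "invertible C" and X: "X ** C = B"
    and gram: "adjoint_mat B ** B = adjoint_mat C ** C"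
  shows "X \<in> unitary_set"
proof -
  define D where "D = matrix_inv C"
  have CD: "C ** D = mat 1" and DC: "D ** C = mat 1"
    unfolding D_def using matrix_inv_mult[OF C] by auto
  have DC': "adjoint_mat D ** adjoint_mat C = mat 1"
    using arg_cong[where f = adjoint_mat, OF CD] by (simp add: adjoint_mat_mult)
  have "adjoint_mat C ** (adjoint_mat X ** X) ** C = adjoint_mat C ** C"
    using X gram by (simp add: adjoint_mat_mult matrix_mul_assoc flip: X)
  then have "adjoint_mat D ** (adjoint_mat C ** (adjoint_mat X ** X) ** C) ** D
      = adjoint_mat D ** (adjoint_mat C ** C) ** D"
    by simp
  then have "adjoint_mat X ** X = mat 1"
    using CD DC' by (simp add: matrix_mul_assoc flip: matrix_mul_assoc[of _ _ D])
  then show ?thesis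
    by (simp add: unitary_set_iff)
qed

definition cayley_path :: "complex^'n^'n \<Rightarrow> real \<Rightarrow> complex^'n^'n" where
  "cayley_path K t = lincomb_one (1 - t) (1 + t) K ** matrix_inv (lincomb_one (1 + t) (1 - t) K)"

context
  fixes K :: "complex^'n^'n"
  assumes K_unitary: "K \<in> unitary_set"
    and K_no_eigenvalue_minus_1: "\<forall>x. K *v x = - x \<longrightarrow> x = 0"
begin

lemma invertible_lincomb_one:
  assumes t: "t \<in> {0..1}"
  shows "invertible (lincomb_one (1 + t) (1 - t) K)"
proof -
  have "x = 0" if x: "lincomb_one (1 + t) (1 - t) K *v x = 0" for x
  proof (rule ccontr)
    assume "x \<noteq> 0"
    have Kx: "(1 - t) *\<^sub>R (K *v x) = - ((1 + t) *\<^sub>R x)"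
      using x unfolding lincomb_one_mult_vector by (simp add: add_eq_0_iff)
    have "(1 - t) * norm x = norm ((1 - t) *\<^sub>R (K *v x))"
      using norm_unitary_mult[OF K_unitary, of x] t by simp
    also have "\<dots> = (1 + t) * norm x"
      unfolding Kx using t by simp
    finally have "(1 - t) * norm x = (1 + t) * norm x" .
    then have "t = 0"
      using \<open>x \<noteq> 0\<close> t by simp
    then show False
      using Kx K_no_eigenvalue_minus_1 \<open>x \<noteq> 0\<close> by simp
  qed
  then show ?thesis
    using matrix_left_invertible_ker invertible_left_inverse by blast
qed

lemma cayley_path_mult_eq_iff:
  assumes "t \<in> {0..1}"
  shows "Y ** lincomb_one (1 + t) (1 - t) K = lincomb_one (1 - t) (1 + t) K \<longleftrightarrow> Y = cayley_path K t"
  unfolding cayley_path_def using invertible_lincomb_one[OF assms]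
  by (rule mult_eq_iff_eq_mult_matrix_inv)

lemma unitary_cayley_path:
  assumes t: "t \<in> {0..1}"
  shows "cayley_path K t \<in> unitary_set"
proof (rule unitary_if_mult_eq_same_gram[OF invertible_lincomb_one[OF t]])
  show "cayley_path K t ** lincomb_one (1 + t) (1 - t) K = lincomb_one (1 - t) (1 + t) K"
    using cayley_path_mult_eq_iff[OF t] by blast
qed (rule gram_lincomb_one_swap[OF K_unitary])

lemma cayley_path_commute:
  assumes t: "t \<in> {0..1}" and KR: "K ** R = R ** K"
  shows "cayley_path K t ** R = R ** cayley_path K t"
proof -
  let ?B = "lincomb_one (1 - t) (1 + t) K" and ?C = "lincomb_one (1 + t) (1 - t) K"
  have "cayley_path K t ** R = ?B ** (matrix_inv ?C ** R)"
    unfolding cayley_path_def by (simp add: matrix_mul_assoc)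
  also have "\<dots> = (?B ** R) ** matrix_inv ?C"
    using matrix_inv_commute[OF invertible_lincomb_one[OF t] lincomb_one_commute[OF KR]]
    by (simp add: matrix_mul_assoc)
  also have "\<dots> = R ** cayley_path K t"
    unfolding cayley_path_def lincomb_one_commute[OF KR] by (simp add: matrix_mul_assoc)
  finally show ?thesis .
qed

lemma cayley_path_0: "cayley_path K 0 = mat 1"
  using cayley_path_mult_eq_iff[of 0 "mat 1"] by simp

lemma cayley_path_1: "cayley_path K 1 = K"
  using cayley_path_mult_eq_iff[of 1 K]
  by (simp add: lincomb_one_def)

lemma continuous_on_cayley_path: "continuous_on {0..1} (cayley_path K)"
proof (rule continuous_from_closed_graph[OF compact_unitary_set])
  show "cayley_path K \<in> {0..1} \<rightarrow> unitary_set"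
    using unitary_cayley_path by blast
  have "(\<lambda>t. (t, cayley_path K t)) ` {0..1}
      = ({0..1} \<times> UNIV) \<inter> {p. snd p ** lincomb_one (1 + fst p) (1 - fst p) K
                                = lincomb_one (1 - fst p) (1 + fst p) K}"
    using cayley_path_mult_eq_iff by fastforce
  moreover have "closed {p :: real \<times> (complex^'n^'n). snd p ** lincomb_one (1 + fst p) (1 - fst p) K
                                = lincomb_one (1 - fst p) (1 + fst p) K}"
    by (intro closed_Collect_eq continuous_intros)
  ultimately show "closed ((\<lambda>t. (t, cayley_path K t)) ` {0..1})"
    by (simp add: closed_Int closed_Times)
qed

end

section \<open>Joining symmetric projective unitaries with equal characters\<close>

lemma conj_eq_scal_mat_commute:
  assumes R: "R \<in> unitary_set" and c: "cmod c = 1"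
    and U0: "adjoint_mat R ** U0 ** R = scal_mat c U0"
    and U1: "adjoint_mat R ** U1 ** R = scal_mat c U1"
  shows "(adjoint_mat U0 ** U1) ** R = R ** (adjoint_mat U0 ** U1)"
proof -
  have U0': "adjoint_mat R ** adjoint_mat U0 ** R = scal_mat (cnj c) (adjoint_mat U0)"
    using arg_cong[where f = adjoint_mat, OF U0]
    by (simp add: adjoint_mat_mult adjoint_mat_scal_mat matrix_mul_assoc)
  have "adjoint_mat R ** (adjoint_mat U0 ** U1) ** R
      = (adjoint_mat R ** adjoint_mat U0 ** R) ** (adjoint_mat R ** U1 ** R)"
    using R by (simp add: unitary_cancel flip: matrix_mul_assoc)
  also have "\<dots> = adjoint_mat U0 ** U1"
    unfolding U0' U1 using mult_cnj_self_eq_1[OF c] by simp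
  finally have "R ** (adjoint_mat R ** (adjoint_mat U0 ** U1) ** R) = R ** (adjoint_mat U0 ** U1)"
    by simp
  then show ?thesis
    using R by (simp add: unitary_cancel flip: matrix_mul_assoc)
qed

lemma commutant_path_to_scalar_multiple:
  fixes M :: "complex^'n^'n"
  assumes M: "M \<in> unitary_set"
  shows "\<exists>\<omega> (\<gamma> :: real \<Rightarrow> complex^'n^'n). cmod \<omega> = 1 \<and> continuous_on {0..1} \<gamma> \<and>
    \<gamma> 0 = mat 1 \<and> \<gamma> 1 = scal_mat \<omega> M \<and>
    (\<forall>t\<in>{0..1}. \<gamma> t \<in> unitary_set \<and> (\<forall>R. M ** R = R ** M \<longrightarrow> \<gamma> t ** R = R ** \<gamma> t))"
proof -
  obtain a where a: "cmod a = 1" "\<forall>x. M *v x = a *s x \<longrightarrow> x = 0"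
    using unitary_non_eigenvalue_exists[OF M] by blast
  define \<omega> where "\<omega> = - cnj a"
  have \<omega>: "cmod \<omega> = 1"
    unfolding \<omega>_def using a(1) by simp
  define K where "K = scal_mat \<omega> M"
  have K: "K \<in> unitary_set"
    unfolding K_def using M \<omega> by (rule unitary_scal_mat)
  have K_minus_1: "\<forall>x. K *v x = - x \<longrightarrow> x = 0"
  proof (intro allI impI)
    fix x assume Kx: "K *v x = - x"
    have "M *v x = (cnj \<omega> * \<omega>) *s (M *v x)"
      using cnj_mult_self_eq_1[OF \<omega>] by simp
    also have "\<dots> = cnj \<omega> *s (K *v x)"
      unfolding K_def by (simp add: scal_mat_mult_vector vector_smult_assoc)
    also have "\<dots> = a *s x"
      using Kx unfolding \<omega>_def by (simp add: vector_smult_rneg vector_smult_lneg)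
    finally show "x = 0"
      using a(2) by blast
  qed
  have "cayley_path K t ** R = R ** cayley_path K t"
    if "t \<in> {0..1}" "M ** R = R ** M" for t R
    using cayley_path_commute[OF K K_minus_1 that(1)] that(2) unfolding K_def by simp
  then show ?thesis
    using \<omega> continuous_on_cayley_path[OF K K_minus_1] cayley_path_0[OF K K_minus_1]
      cayley_path_1[OF K K_minus_1] unitary_cayley_path[OF K K_minus_1]
    unfolding K_def by blast
qed

lemma path_component_if_chiV_eq:
  fixes \<rho> :: "'g \<Rightarrow> complex^'n^'n"
  assumes \<rho>: "\<And>g. g \<in> carrier G \<Longrightarrow> \<rho> g \<in> unitary_set"
    and V: "V \<in> sym_PU G \<rho>" and W: "W \<in> sym_PU G \<rho>"
    and eq: "\<And>g. g \<in> carrier G \<Longrightarrow> chiV G \<rho> V g = chiV G \<rho> W g"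
  shows "path_component_of (subtopology PU_top (sym_PU G \<rho>)) V W"
proof -
  obtain U0 where U0: "U0 \<in> unitary_set" "U0 \<in> V" "V = pclass U0"
    using V by (rule sym_PU_obtain_lift)
  obtain U1 where U1: "U1 \<in> unitary_set" "U1 \<in> W" "W = pclass U1"
    using W by (rule sym_PU_obtain_lift)
  have conj0: "adjoint_mat (\<rho> g) ** U0 ** \<rho> g = scal_mat (chiV G \<rho> V g) U0"
    and norm: "cmod (chiV G \<rho> V g) = 1" if "g \<in> carrier G" for g
    using chiV_conj[OF V U0(2) that \<rho>[OF that]] by blast+
  have M_comm: "(adjoint_mat U0 ** U1) ** \<rho> g = \<rho> g ** (adjoint_mat U0 ** U1)"
    if g: "g \<in> carrier G" for g
    using conj_eq_scal_mat_commute[OF \<rho>[OF g] norm[OF g] conj0[OF g]]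
      chiV_conj(1)[OF W U1(2) g \<rho>[OF g]] eq[OF g] by simp
  obtain \<omega> and \<gamma> :: "real \<Rightarrow> complex^'n^'n" where \<omega>: "cmod \<omega> = 1"
    and cont: "continuous_on {0..1} \<gamma>"
    and ends: "\<gamma> 0 = mat 1" "\<gamma> 1 = scal_mat \<omega> (adjoint_mat U0 ** U1)"
    and \<gamma>: "\<forall>t\<in>{0..1}. \<gamma> t \<in> unitary_set \<and>
                (\<forall>R. adjoint_mat U0 ** U1 ** R = R ** (adjoint_mat U0 ** U1) \<longrightarrow> \<gamma> t ** R = R ** \<gamma> t)"
    using commutant_path_to_scalar_multiple[OF unitary_mult[OF unitary_adjoint[OF U0(1)] U1(1)]]
    by blast
  have comm_\<rho>: "\<gamma> t ** \<rho> g = \<rho> g ** \<gamma> t" if "t \<in> {0..1}" "g \<in> carrier G" for t g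
    using \<gamma> M_comm that by blast
  define \<Gamma> where "\<Gamma> t = U0 ** \<gamma> t" for t
  have \<Gamma>: "\<Gamma> t \<in> unitary_set" if "t \<in> {0..1}" for t
    unfolding \<Gamma>_def using U0(1) \<gamma> that by (simp add: unitary_mult)
  have "pclass (\<Gamma> t) \<in> sym_PU G \<rho>" if t: "t \<in> {0..1}" for t
  proof (rule pclass_in_sym_PU[OF \<Gamma>[OF t] \<rho>])
    fix g assume g: "g \<in> carrier G"
    have "adjoint_mat (\<rho> g) ** \<Gamma> t ** \<rho> g = adjoint_mat (\<rho> g) ** U0 ** (\<gamma> t ** \<rho> g)"
      unfolding \<Gamma>_def by (simp add: matrix_mul_assoc)
    also have "\<dots> = (adjoint_mat (\<rho> g) ** U0 ** \<rho> g) ** \<gamma> t"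
      unfolding comm_\<rho>[OF t g] by (simp add: matrix_mul_assoc)
    finally show "\<exists>c. cmod c = 1 \<and> adjoint_mat (\<rho> g) ** \<Gamma> t ** \<rho> g = scal_mat c (\<Gamma> t)"
      using conj0[OF g] norm[OF g] unfolding \<Gamma>_def by auto
  qed
  moreover have "continuous_map (top_of_set {0..1}) PU_top (pclass \<circ> \<Gamma>)"
  proof (rule continuous_map_compose[OF _ continuous_map_pclass])
    show "continuous_map (top_of_set {0..1}) U_top \<Gamma>"
      unfolding U_top_def \<Gamma>_def continuous_map_in_subtopology
      using cont \<Gamma> unfolding \<Gamma>_def by (auto intro!: continuous_intros)
  qed
  moreover have "(pclass \<circ> \<Gamma>) 0 = V" "(pclass \<circ> \<Gamma>) 1 = W"
    using ends U0 U1 \<omega> unfolding \<Gamma>_def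
    by (simp_all add: pclass_scal_mat unitary_cancel)
  ultimately show ?thesis
    unfolding path_component_of_def pathin_def continuous_map_in_subtopology by auto
qed

lemma power_char_order_eq_1:
  assumes "finite_order_char G \<psi>" and "g \<in> carrier G"
  shows "\<psi> g ^ char_order G \<psi> = 1"
proof -
  have "char_order G \<psi> > 0 \<and> (\<forall>g\<in>carrier G. \<psi> g ^ char_order G \<psi> = 1)"
    using assms(1) unfolding finite_order_char_def char_order_def by (rule LeastI_ex)
  then show ?thesis
    using assms(2) by blast
qed

theorem mainTheorem8:
  fixes G :: "('g, 'x) monoid_scheme" and T :: "'g topology"
    and \<rho> :: "'g \<Rightarrow> complex^'n^'n"
  assumes "topological_group G T"
    and "unitary_rep G T \<rho>"
  shows
    \<comment> \<open>well-definedness: chi[V] is a character and satisfies the defining relation for every lift\<close>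
    "(\<forall>V\<in>sym_PU G \<rho>. character G T (chiV G \<rho> V) \<and>
        (\<forall>U\<in>V. \<forall>g\<in>carrier G.
           adjoint_mat (\<rho> g) ** U ** \<rho> g = scal_mat (chiV G \<rho> V g) U))
   \<and> \<comment> \<open>path components of the symmetric space correspond to attained values of chi[V]\<close>
     (\<forall>V\<in>sym_PU G \<rho>. \<forall>W\<in>sym_PU G \<rho>.
        path_component_of (subtopology PU_top (sym_PU G \<rho>)) V W
          \<longleftrightarrow> (\<forall>g\<in>carrier G. chiV G \<rho> V g = chiV G \<rho> W g))
   \<and> \<comment> \<open>attained values have finite order\<close>
     (\<forall>V\<in>sym_PU G \<rho>. finite_order_char G (chiV G \<rho> V))
   \<and> \<comment> \<open>every torsion character is attained for \<rho> = \<oplus>_{p<n} \<psi>^p, n the order of \<psi>\<close>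
     (\<forall>(\<psi>::'g \<Rightarrow> complex) (e::'k::finite \<Rightarrow> nat).
        character G T \<psi> \<and> finite_order_char G \<psi> \<and> char_order G \<psi> = CARD('k) \<and>
        bij_betw e UNIV {..<CARD('k)} \<longrightarrow>
        (\<exists>V\<in>sym_PU G (diag_powers_rep e \<psi>).
           \<forall>g\<in>carrier G. chiV G (diag_powers_rep e \<psi>) V g = \<psi> g))
   \<and> \<comment> \<open>multiplicativity under tensor products, and stability under V \<mapsto> V \<otimes> 1\<close>
     (\<forall>(\<sigma>::'g \<Rightarrow> complex^'m::finite^'m). unitary_rep G T \<sigma> \<longrightarrow>
        (\<forall>V\<in>sym_PU G \<rho>. \<forall>Q\<in>sym_PU G \<sigma>.
           ptensor V Q \<in> sym_PU G (tensor_rep \<rho> \<sigma>) \<and>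
           (\<forall>g\<in>carrier G. chiV G (tensor_rep \<rho> \<sigma>) (ptensor V Q) g
                           = chiV G \<rho> V g * chiV G \<sigma> Q g)) \<and>
        (\<forall>V\<in>sym_PU G \<rho>.
           ptensor V (pclass (mat 1)) \<in> sym_PU G (tensor_rep \<rho> \<sigma>) \<and>
           (\<forall>g\<in>carrier G. chiV G (tensor_rep \<rho> \<sigma>) (ptensor V (pclass (mat 1))) g
                           = chiV G \<rho> V g)))"
proof -
  note \<rho> = unitary_repD(2)[OF assms(2)]
  have conj: "adjoint_mat (\<rho> g) ** U ** \<rho> g = scal_mat (chiV G \<rho> V g) U"
    if "V \<in> sym_PU G \<rho>" "U \<in> V" "g \<in> carrier G" for V U g
    using chiV_conj(1)[OF that \<rho>[OF that(3)]] .
  have path: "path_component_of (subtopology PU_top (sym_PU G \<rho>)) V W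
      \<longleftrightarrow> (\<forall>g\<in>carrier G. chiV G \<rho> V g = chiV G \<rho> W g)"
    if "V \<in> sym_PU G \<rho>" "W \<in> sym_PU G \<rho>" for V W
    using chiV_eq_if_path_component[of G \<rho>] path_component_if_chiV_eq[of G \<rho> V W] \<rho> that
    by blast
  have finite_order: "finite_order_char G (chiV G \<rho> V)" if "V \<in> sym_PU G \<rho>" for V
    unfolding finite_order_char_def using chiV_power_card[OF that _ \<rho>]
    by (intro exI[of _ "CARD('n)"]) simp
  have torsion: "\<exists>V\<in>sym_PU G (diag_powers_rep e \<psi>).
      \<forall>g\<in>carrier G. chiV G (diag_powers_rep e \<psi>) V g = \<psi> g"
    if "finite_order_char G \<psi>" "char_order G \<psi> = CARD('k)" "bij_betw e UNIV {..<CARD('k)}"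
    for \<psi> and e :: "'k::finite \<Rightarrow> nat"
    using power_char_order_eq_1[OF that(1)] that(2)
    by (intro torsion_character_attained[OF _ that(3)]) simp
  have tensor: "ptensor V Q \<in> sym_PU G (tensor_rep \<rho> \<sigma>)"
    "g \<in> carrier G \<Longrightarrow> chiV G (tensor_rep \<rho> \<sigma>) (ptensor V Q) g = chiV G \<rho> V g * chiV G \<sigma> Q g"
    if "unitary_rep G T \<sigma>" "V \<in> sym_PU G \<rho>" "Q \<in> sym_PU G \<sigma>"
    for V and \<sigma> :: "'g \<Rightarrow> complex^'m^'m" and Q g
    using ptensor_sym_PU[OF \<rho> unitary_repD(2)[OF that(1)] that(2,3)] by blast+
  have one: "pclass (mat 1) \<in> sym_PU G \<sigma>" "g \<in> carrier G \<Longrightarrow> chiV G \<sigma> (pclass (mat 1)) g = 1"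
    if "unitary_rep G T \<sigma>" for \<sigma> :: "'g \<Rightarrow> complex^'m^'m" and g
    using pclass_one_sym_PU[of G \<sigma>] unitary_repD(2)[OF that] by blast+
  show ?thesis
    using chiV_character[OF assms] conj path finite_order torsion tensor one by auto
qed

end
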